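(* Let $A=(V_\exists,V_\forall,E,E_f)$ be a fair game arena, $\alpha$ an $\omega$-regular winning condition over $V$, and $v\in V$. Then $$\exists s\in\Sigma^f.\,\forall t\in\Pi^f.\,\mathsf{play}_v(s,t)\in\alpha$$ holds if and only if $$\exists s\in\Sigma.\,\forall t\in\Pi.\,\mathsf{fair}_\exists(\mathsf{play}_v(s,t))\wedge\big(\mathsf{fair}_\forall(\mathsf{play}_v(s,t))\Rightarrow\mathsf{play}_v(s,t)\in\alpha\big)$$ holds.
   Context: A fair game arena $A=(V_\exists,V_\forall,E,E_f)$: finite node set $V=V_\exists\cup V_\forall$ (disjoint), right-total moves $E\subseteq V\times V$, fair moves $E_f\subseteq E$. A play is an infinite sequence $\tau=v_0v_1\ldots$ with $(v_j,v_{j+1})\in E$; $\tau_m$ is its sequence of moves; $\mathsf{Inf}$ denotes the set of elements occurring infinitely often. For $i\in\{\exists,\forall\}$, $\tau$ is $i$-fair ($\mathsf{fair}_i(\tau)$) if for all $u\in V_i\cap\mathsf{Inf}(\tau)$, every $(u,u')\in E_f$ is in $\mathsf{Inf}(\tau_m)$. A strategy for player $i$ is a function $p:V^*\cdot V_i\to V$ with $p(w\cdot u)\in E(u)$; $\Sigma$ ($\Pi$) is the set of strategies of $\exists$ ($\forall$); $\mathsf{play}_v(s,t)$ is the unique play from $v$ compliant with $s$ and $t$. A strategy is $i$-fair if every play it admits is $i$-fair; $\Sigma^f$, $\Pi^f$ are the sets of $\exists$-fair and $\forall$-fair strategies. An $\omega$-regular winning condition is an $\omega$-regular language $\alpha\subseteq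 V^\omega$. *)

theory Defs
  imports Main
begin

definition fair_arena :: "'v set \<Rightarrow> 'v set \<Rightarrow> ('v \<times> 'v) set \<Rightarrow> ('v \<times> 'v) set \<Rightarrow> bool" where
  "fair_arena Vex Vall E Ef \<longleftrightarrow>
     finite (Vex \<union> Vall) \<and> Vex \<inter> Vall = {} \<and>
     E \<subseteq> (Vex \<union> Vall) \<times> (Vex \<union> Vall) \<and>
     (\<forall>u \<in> Vex \<union> Vall. \<exists>u'. (u, u') \<in> E) \<and>
     Ef \<subseteq> E"

definition is_play :: "('v \<times> 'v) set \<Rightarrow> (nat \<Rightarrow> 'v) \<Rightarrow> bool" where
  "is_play E \<tau> \<longleftrightarrow> (\<forall>j. (\<tau> j, \<tau> (Suc j)) \<in> E)"

definition moves :: "(nat \<Rightarrow> 'v) \<Rightarrow> nat \<Rightarrow> 'v \<times> 'v" where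
  "moves \<tau> j = (\<tau> j, \<tau> (Suc j))"

definition Inf_set :: "(nat \<Rightarrow> 'a) \<Rightarrow> 'a set" where
  "Inf_set \<tau> = {x. \<exists>\<^sub>\<infinity>n. \<tau> n = x}"

(* fair_i(\<tau>) for the player owning the node set Vi *)
definition fair :: "'v set \<Rightarrow> ('v \<times> 'v) set \<Rightarrow> (nat \<Rightarrow> 'v) \<Rightarrow> bool" where
  "fair Vi Ef \<tau> \<longleftrightarrow>
     (\<forall>u \<in> Vi \<inter> Inf_set \<tau>. \<forall>u'. (u, u') \<in> Ef \<longrightarrow> (u, u') \<in> Inf_set (moves \<tau>))"

(* A strategy p : V^* . V_i \<rightarrow> V is represented as a function taking the history
   prefix w and the current node u; p w u is the successor chosen. *)
type_synonym 'v strategy = "'v list \<Rightarrow> 'v \<Rightarrow> 'v"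

definition strategies :: "'v set \<Rightarrow> ('v \<times> 'v) set \<Rightarrow> 'v strategy set" where
  "strategies Vi E = {p. \<forall>w u. u \<in> Vi \<longrightarrow> (u, p w u) \<in> E}"

definition prefix :: "(nat \<Rightarrow> 'v) \<Rightarrow> nat \<Rightarrow> 'v list" where
  "prefix \<tau> n = map \<tau> [0..<n]"

definition complies :: "'v set \<Rightarrow> 'v strategy \<Rightarrow> (nat \<Rightarrow> 'v) \<Rightarrow> bool" where
  "complies Vi p \<tau> \<longleftrightarrow> (\<forall>n. \<tau> n \<in> Vi \<longrightarrow> \<tau> (Suc n) = p (prefix \<tau> n) (\<tau> n))"

fun play_hist :: "'v set \<Rightarrow> 'v strategy \<Rightarrow> 'v strategy \<Rightarrow> 'v \<Rightarrow> nat \<Rightarrow> 'v list" where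
  "play_hist Vex s t v 0 = [v]"
| "play_hist Vex s t v (Suc n) =
     (let h = play_hist Vex s t v n; u = last h in
      h @ [if u \<in> Vex then s (butlast h) u else t (butlast h) u])"

definition play :: "'v set \<Rightarrow> 'v \<Rightarrow> 'v strategy \<Rightarrow> 'v strategy \<Rightarrow> nat \<Rightarrow> 'v" where
  "play Vex v s t n = last (play_hist Vex s t v n)"

definition fair_strategies :: "'v set \<Rightarrow> 'v set \<Rightarrow> ('v \<times> 'v) set \<Rightarrow> ('v \<times> 'v) set \<Rightarrow> 'v strategy set" where
  "fair_strategies V Vi E Ef =
     {p \<in> strategies Vi E. \<forall>\<tau>. is_play E \<tau> \<and> \<tau> 0 \<in> V \<and> complies Vi p \<tau> \<longrightarrow> fair Vi Ef \<tau>}"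

(* omega-regular languages: accepted by a nondeterministic Buechi automaton
   (finite state set, states encoded as natural numbers) *)
definition omega_regular :: "(nat \<Rightarrow> 'v) set \<Rightarrow> bool" where
  "omega_regular L \<longleftrightarrow>
     (\<exists>(Q::nat set) Q0 (\<delta>::nat \<Rightarrow> 'v \<Rightarrow> nat set) F.
        finite Q \<and> Q0 \<subseteq> Q \<and> F \<subseteq> Q \<and> (\<forall>q a. \<delta> q a \<subseteq> Q) \<and>
        L = {w. \<exists>r. r 0 \<in> Q0 \<and> (\<forall>n. r (Suc n) \<in> \<delta> (r n) (w n)) \<and> (\<exists>\<^sub>\<infinity>n. r n \<in> F)})"

end

theory Submission
  imports Defs "HOL-Library.Infinite_Set"
begin

text \<open>
  Both directions rest on one construction. A strategy \<open>p\<close> is made fair by following it as long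
  as the history lies in a prefix-closed set \<open>P\<close> and playing round robin (cycling through the
  successors of the current node) once it has left \<open>P\<close>: plays that leave \<open>P\<close> are then fair,
  and plays that stay in \<open>P\<close> are plays of \<open>p\<close>. For the forward direction, the \<open>\<forall>\<close>-strategy
  \<open>t\<close> is patched outside the prefixes of the single \<open>\<forall>\<close>-fair play \<open>play\<^sub>v(s,t)\<close>; for the backward
  direction, \<open>s\<close> is patched outside the histories starting in \<open>v\<close>, whose plays are
  \<open>\<exists>\<close>-fair by assumption.
\<close>

lemma prefix_0 [simp]: "prefix \<tau> 0 = []"
  by (simp add: prefix_def)

lemma prefix_Suc: "prefix \<tau> (Suc n) = prefix \<tau> n @ [\<tau> n]"
  by (simp add: prefix_def)

lemma length_prefix [simp]: "length (prefix \<tau> n) = n"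
  by (simp add: prefix_def)

lemma hd_prefix: "0 < n \<Longrightarrow> hd (prefix \<tau> n) = \<tau> 0"
  by (simp add: prefix_def hd_map)

lemma nth_prefix: "j < n \<Longrightarrow> prefix \<tau> n ! j = \<tau> j"
  by (simp add: prefix_def)

lemma prefix_eq_prefix_iff: "prefix \<tau> m = prefix \<sigma> n \<longleftrightarrow> m = n \<and> (\<forall>j<n. \<tau> j = \<sigma> j)"
  by (metis length_prefix nth_prefix nth_equalityI)

lemma prefix_eq_snoc_iff: "prefix \<tau> m = w @ [u] \<longleftrightarrow> (\<exists>k. m = Suc k \<and> w = prefix \<tau> k \<and> u = \<tau> k)"
  by (cases m) (auto simp: prefix_Suc)

lemma prefixes_in_range_prefix: "\<forall>n. prefix \<tau> n \<in> range (prefix \<rho>) \<Longrightarrow> \<tau> = \<rho>"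
  by (metis lessI prefix_eq_prefix_iff rangeE ext)

lemma complies_subset: "Vi \<subseteq> Vj \<Longrightarrow> complies Vj p \<tau> \<Longrightarrow> complies Vi p \<tau>"
  by (auto simp: complies_def)

lemma play_hist_eq_prefix: "play_hist Vex s t v n = prefix (play Vex v s t) (Suc n)"
proof (induction n)
  case 0
  then show ?case by (simp add: prefix_def play_def)
next
  case (Suc n)
  have "play_hist Vex s t v (Suc n) = play_hist Vex s t v n @ [last (play_hist Vex s t v (Suc n))]"
    by (simp add: Let_def)
  also have "\<dots> = prefix (play Vex v s t) (Suc n) @ [play Vex v s t (Suc n)]"
    using Suc unfolding play_def[of Vex v s t "Suc n"] by simp
  finally show ?case by (simp add: prefix_Suc[of _ "Suc n"])
qed

lemma play_0: "play Vex v s t 0 = v"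
  by (simp add: play_def)

lemma play_Suc: "play Vex v s t (Suc n) =
   (if play Vex v s t n \<in> Vex then s (prefix (play Vex v s t) n) (play Vex v s t n)
    else t (prefix (play Vex v s t) n) (play Vex v s t n))"
proof -
  have "play_hist Vex s t v n = prefix (play Vex v s t) n @ [play Vex v s t n]"
    by (simp add: play_hist_eq_prefix prefix_Suc)
  then show ?thesis
    by (simp add: play_def[of _ _ _ _ "Suc n"] Let_def)
qed

lemma complies_play:
  shows "complies Vex s (play Vex v s t)" and "complies (- Vex) t (play Vex v s t)"
  by (auto simp: complies_def play_Suc)

lemma eq_play_iff: "\<tau> = play Vex v s t \<longleftrightarrow> \<tau> 0 = v \<and> complies Vex s \<tau> \<and> complies (- Vex) t \<tau>"
proof
  assume \<tau>: "\<tau> 0 = v \<and> complies Vex s \<tau> \<and> complies (- Vex) t \<tau>"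
  have "\<tau> n = play Vex v s t n" for n
  proof (induction n rule: less_induct)
    case (less n)
    show ?case
    proof (cases n)
      case 0
      then show ?thesis using \<tau> by (simp add: play_0)
    next
      case (Suc m)
      then have "prefix \<tau> m = prefix (play Vex v s t) m" and "\<tau> m = play Vex v s t m"
        using less.IH by (auto simp: prefix_eq_prefix_iff)
      then show ?thesis using \<tau> Suc by (auto simp: complies_def play_Suc)
    qed
  qed
  then show "\<tau> = play Vex v s t" ..
qed (simp add: play_0 complies_play)

lemma is_play_play:
  assumes arena: "fair_arena Vex Vall E Ef" and v: "v \<in> Vex \<union> Vall"
    and s: "s \<in> strategies Vex E" and t: "t \<in> strategies Vall E"
  shows "is_play E (play Vex v s t)"
proof -
  have move: "(play Vex v s t n, play Vex v s t (Suc n)) \<in> E" if "play Vex v s t n \<in> Vex \<union> Vall" for n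
    using that s t by (auto simp: play_Suc strategies_def)
  have "play Vex v s t n \<in> Vex \<union> Vall" for n
  proof (induction n)
    case (Suc n)
    then show ?case using move[OF Suc] arena by (auto simp: fair_arena_def)
  qed (use v in \<open>simp add: play_0\<close>)
  then show ?thesis by (simp add: is_play_def move)
qed

lemma fair_strategiesD:
  "p \<in> fair_strategies V Vi E Ef \<Longrightarrow> is_play E \<tau> \<Longrightarrow> \<tau> 0 \<in> V \<Longrightarrow> complies Vi p \<tau>
    \<Longrightarrow> fair Vi Ef \<tau>"
  by (simp add: fair_strategies_def)

lemma fair_strategies_subset: "fair_strategies V Vi E Ef \<subseteq> strategies Vi E"
  by (auto simp: fair_strategies_def)

lemma fair_play:
  assumes arena: "fair_arena Vex Vall E Ef" and v: "v \<in> Vex \<union> Vall"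
    and s: "s \<in> strategies Vex E" and t: "t \<in> strategies Vall E"
  shows "s \<in> fair_strategies (Vex \<union> Vall) Vex E Ef \<Longrightarrow> fair Vex Ef (play Vex v s t)"
    and "t \<in> fair_strategies (Vex \<union> Vall) Vall E Ef \<Longrightarrow> fair Vall Ef (play Vex v s t)"
proof -
  have Vall: "Vall \<subseteq> - Vex" using arena by (auto simp: fair_arena_def)
  have play: "is_play E (play Vex v s t)" by (rule is_play_play[OF arena v s t])
  have start: "play Vex v s t 0 \<in> Vex \<union> Vall" using v by (simp add: play_0)
  show "fair Vex Ef (play Vex v s t)" if "s \<in> fair_strategies (Vex \<union> Vall) Vex E Ef"
    by (rule fair_strategiesD[OF that play start complies_play(1)])
  show "fair Vall Ef (play Vex v s t)" if "t \<in> fair_strategies (Vex \<union> Vall) Vall E Ef"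
    by (rule fair_strategiesD[OF that play start complies_subset[OF Vall complies_play(2)]])
qed

definition successors :: "('v \<times> 'v) set \<Rightarrow> 'v \<Rightarrow> 'v list" where
  "successors E u = (SOME L. set L = E `` {u})"

definition round_robin :: "('v \<times> 'v) set \<Rightarrow> 'v strategy" where
  "round_robin E w u = successors E u ! (count_list w u mod length (successors E u))"

lemma set_successors:
  assumes "fair_arena Vex Vall E Ef"
  shows "set (successors E u) = E `` {u}"
proof -
  have "finite (E `` {u})"
    using assms by (auto simp: fair_arena_def intro: finite_subset)
  then show ?thesis
    unfolding successors_def by (rule someI_ex[OF finite_list])
qed

lemma round_robin_move:
  assumes "fair_arena Vex Vall E Ef" and "u \<in> Vex \<union> Vall"
  shows "(u, round_robin E w u) \<in> E"
proof -
  obtain u' where "(u, u') \<in> E" using assms unfolding fair_arena_def by blast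
  then have "successors E u \<noteq> []" using set_successors[OF assms(1), of u] by auto
  then have "round_robin E w u \<in> set (successors E u)"
    by (simp add: round_robin_def)
  then show ?thesis using set_successors[OF assms(1)] by auto
qed

lemma card_less_enumerate:
  fixes S :: "nat set"
  assumes "infinite S"
  shows "card {j \<in> S. j < enumerate S n} = n"
proof -
  have "j \<in> enumerate S ` {..<n}" if "j \<in> S" "j < enumerate S n" for j
  proof -
    obtain i where "enumerate S i = j" using enumerate_Ex[OF assms \<open>j \<in> S\<close>] ..
    with that assms show ?thesis by auto
  qed
  then have "{j \<in> S. j < enumerate S n} = enumerate S ` {..<n}"
    using assms by (auto simp: enumerate_in_set)
  then show ?thesis
    using inj_enumerate[OF assms] by (simp add: card_image inj_on_subset)
qed

lemma Inf_set_visit_with_count: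
  assumes "u \<in> Inf_set \<tau>"
  shows "\<exists>m. \<tau> m = u \<and> count_list (prefix \<tau> m) u = T"
proof -
  let ?S = "{n. \<tau> n = u}"
  have S: "infinite ?S" using assms by (simp add: Inf_set_def frequently_cofinite)
  have count: "count_list (prefix \<tau> m) u = card {j \<in> ?S. j < m}" for m
    unfolding count_list_eq_length_filter prefix_def filter_map length_map length_filter_conv_card
    by simp (rule arg_cong[where f = card], auto)
  show ?thesis
  proof (intro exI conjI)
    show "\<tau> (enumerate ?S T) = u" using enumerate_in_set[OF S] by simp
    show "count_list (prefix \<tau> (enumerate ?S T)) u = T" by (simp only: count card_less_enumerate[OF S])
  qed
qed

lemma round_robin_fair:
  assumes arena: "fair_arena Vex Vall E Ef"
    and follows: "\<forall>m\<ge>n\<^sub>0. \<tau> m \<in> Vi \<longrightarrow> \<tau> (Suc m) = round_robin E (prefix \<tau> m) (\<tau> m)"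
  shows "fair Vi Ef \<tau>"
  unfolding fair_def
proof (intro ballI allI impI)
  fix u u' assume u: "u \<in> Vi \<inter> Inf_set \<tau>" and "(u, u') \<in> Ef"
  then have "u' \<in> set (successors E u)"
    using arena set_successors[OF arena, of u] by (auto simp: fair_arena_def)
  then obtain i where i: "i < length (successors E u)" "successors E u ! i = u'"
    by (auto simp: in_set_conv_nth)
  let ?k = "length (successors E u)"
  have "\<exists>m>N. moves \<tau> m = (u, u')" for N
  proof -
    \<comment> \<open>Since visits are counted in the history, the visit with count \<open>T\<close> happens at time \<open>m \<ge> T\<close>.\<close>
    define T where "T = (N + n\<^sub>0 + 1) * ?k + i"
    obtain m where m: "\<tau> m = u" "count_list (prefix \<tau> m) u = T"
      using Inf_set_visit_with_count[of u \<tau> T] u by auto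
    have "T \<le> m" using count_le_length[of "prefix \<tau> m" u] m by simp
    moreover have "N + n\<^sub>0 + 1 \<le> T"
      using i mult_le_mono2[of 1 ?k "N + n\<^sub>0 + 1"] by (simp add: T_def)
    ultimately have "N < m" "n\<^sub>0 \<le> m" by simp_all
    moreover have "\<tau> (Suc m) = u'"
    proof -
      have "\<tau> (Suc m) = round_robin E (prefix \<tau> m) u"
        using follows \<open>n\<^sub>0 \<le> m\<close> m(1) u by auto
      also have "\<dots> = u'"
        using m(2) i mod_mult_self3[of "N + n\<^sub>0 + 1" ?k i]
        by (simp add: round_robin_def T_def del: mod_mult_self3)
      finally show ?thesis .
    qed
    ultimately show ?thesis using m by (auto simp: moves_def)
  qed
  then show "(u, u') \<in> Inf_set (moves \<tau>)"
    by (simp add: Inf_set_def INFM_nat)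
qed

definition patch :: "'v list set \<Rightarrow> 'v strategy \<Rightarrow> ('v \<times> 'v) set \<Rightarrow> 'v strategy" where
  "patch P p E w u = (if w @ [u] \<in> P then p w u else round_robin E w u)"

lemma patch_in_strategies:
  assumes "fair_arena Vex Vall E Ef" and "Vi \<subseteq> Vex \<union> Vall" and "p \<in> strategies Vi E"
  shows "patch P p E \<in> strategies Vi E"
  using assms round_robin_move[OF assms(1)] by (auto simp: strategies_def patch_def)

lemma complies_patch_iff:
  assumes "\<forall>n. prefix \<tau> n \<in> P"
  shows "complies Vi (patch P p E) \<tau> \<longleftrightarrow> complies Vi p \<tau>"
  using assms by (simp add: complies_def patch_def prefix_Suc[symmetric])

lemma prefix_notin_prefix_closed:
  assumes closed: "\<And>w u. w @ [u] \<in> P \<Longrightarrow> w \<in> P"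
    and "prefix \<tau> n \<notin> P" and "n \<le> m"
  shows "prefix \<tau> m \<notin> P"
  using \<open>n \<le> m\<close>
proof (induction m rule: dec_induct)
  case (step m)
  then show ?case using closed by (metis prefix_Suc)
qed (fact assms(2))

lemma patch_in_fair_strategies:
  assumes arena: "fair_arena Vex Vall E Ef" and "Vi \<subseteq> Vex \<union> Vall" and "p \<in> strategies Vi E"
    and closed: "\<And>w u. w @ [u] \<in> P \<Longrightarrow> w \<in> P"
    and fair_inside: "\<And>\<tau>. is_play E \<tau> \<Longrightarrow> \<tau> 0 \<in> Vex \<union> Vall \<Longrightarrow> complies Vi p \<tau>
      \<Longrightarrow> \<forall>n. prefix \<tau> n \<in> P \<Longrightarrow> fair Vi Ef \<tau>"
  shows "patch P p E \<in> fair_strategies (Vex \<union> Vall) Vi E Ef"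
proof -
  have "fair Vi Ef \<tau>"
    if play: "is_play E \<tau>" "\<tau> 0 \<in> Vex \<union> Vall" and complies: "complies Vi (patch P p E) \<tau>" for \<tau>
  proof (cases "\<forall>n. prefix \<tau> n \<in> P")
    case True
    then show ?thesis using play complies fair_inside complies_patch_iff by blast
  next
    case False
    then obtain n\<^sub>0 where "prefix \<tau> n\<^sub>0 \<notin> P" by blast
    then have "prefix \<tau> (Suc m) \<notin> P" if "n\<^sub>0 \<le> m" for m
      using prefix_notin_prefix_closed[OF closed] that by simp
    then have "\<forall>m\<ge>n\<^sub>0. \<tau> m \<in> Vi \<longrightarrow> \<tau> (Suc m) = round_robin E (prefix \<tau> m) (\<tau> m)"
      using complies by (auto simp: complies_def patch_def prefix_Suc)
    then show ?thesis by (rule round_robin_fair[OF arena])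
  qed
  with patch_in_strategies[OF assms(1-3)] show ?thesis
    by (simp add: fair_strategies_def)
qed

lemma complying_play_eq_play:
  fixes \<tau> :: "nat \<Rightarrow> 'v"
  assumes arena: "fair_arena Vex Vall E Ef" and "is_play E \<tau>" and "complies Vex s \<tau>"
  shows "\<exists>t \<in> strategies Vall E. \<tau> = play Vex (\<tau> 0) s t"
proof -
  define t where "t w u =
    (if (u, \<tau> (Suc (length w))) \<in> E then \<tau> (Suc (length w)) else (SOME u'. (u, u') \<in> E))"
    for w :: "'v list" and u
  have "t \<in> strategies Vall E"
  proof (unfold strategies_def, intro CollectI allI impI)
    fix w u assume "u \<in> Vall"
    then have "\<exists>u'. (u, u') \<in> E" using arena unfolding fair_arena_def by blast
    then show "(u, t w u) \<in> E" unfolding t_def by (auto intro: someI_ex)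
  qed
  moreover have "complies (- Vex) t \<tau>"
    using \<open>is_play E \<tau>\<close> by (simp add: complies_def is_play_def t_def)
  ultimately have "\<tau> = play Vex (\<tau> 0) s t"
    unfolding eq_play_iff using assms(3) by blast
  with \<open>t \<in> strategies Vall E\<close> show ?thesis by blast
qed

lemma prefix_closed_range_prefix:
  assumes "w @ [u] \<in> range (prefix \<rho>)"
  shows "w \<in> range (prefix \<rho>)"
proof -
  obtain m where "prefix \<rho> m = w @ [u]" using assms by auto
  then show ?thesis by (auto simp: prefix_eq_snoc_iff)
qed

lemma fair_strategy_with_same_play:
  assumes arena: "fair_arena Vex Vall E Ef" and v: "v \<in> Vex \<union> Vall"
    and s: "s \<in> strategies Vex E" and t: "t \<in> strategies Vall E"
    and fair: "fair Vall Ef (play Vex v s t)"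
  shows "\<exists>t' \<in> fair_strategies (Vex \<union> Vall) Vall E Ef. play Vex v s t' = play Vex v s t"
proof -
  define \<rho> where "\<rho> = play Vex v s t"
  define t' where "t' = patch (range (prefix \<rho>)) t E"
  have "t' \<in> fair_strategies (Vex \<union> Vall) Vall E Ef"
    unfolding t'_def
  proof (rule patch_in_fair_strategies[OF arena _ t])
    show "\<And>w u. w @ [u] \<in> range (prefix \<rho>) \<Longrightarrow> w \<in> range (prefix \<rho>)"
      by (rule prefix_closed_range_prefix)
    show "fair Vall Ef \<tau>"
      if "is_play E \<tau>" "\<tau> 0 \<in> Vex \<union> Vall" "complies Vall t \<tau>" "\<forall>n. prefix \<tau> n \<in> range (prefix \<rho>)"
      for \<tau>
      using fair prefixes_in_range_prefix[OF that(4)] by (simp add: \<rho>_def)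
  qed simp
  moreover have "\<rho> = play Vex v s t'"
  proof -
    have in_range: "\<forall>n. prefix \<rho> n \<in> range (prefix \<rho>)" by simp
    show ?thesis
      unfolding eq_play_iff t'_def complies_patch_iff[OF in_range]
      by (simp add: \<rho>_def play_0 complies_play)
  qed
  ultimately show ?thesis unfolding \<rho>_def by metis
qed

lemma fair_strategy_with_same_plays:
  assumes arena: "fair_arena Vex Vall E Ef" and s: "s \<in> strategies Vex E"
    and fair: "\<forall>t \<in> strategies Vall E. fair Vex Ef (play Vex v s t)"
  shows "\<exists>s' \<in> fair_strategies (Vex \<union> Vall) Vex E Ef. \<forall>t. play Vex v s' t = play Vex v s t"
proof -
  define P where "P = {w. w = [] \<or> hd w = v}"
  have from_v: "(\<forall>n. prefix \<tau> n \<in> P) \<longleftrightarrow> \<tau> 0 = v" for \<tau>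
  proof
    assume "\<forall>n. prefix \<tau> n \<in> P"
    then have "prefix \<tau> 1 \<in> P" ..
    then show "\<tau> 0 = v" by (simp add: P_def prefix_def)
  next
    assume "\<tau> 0 = v"
    then have "prefix \<tau> n \<in> P" for n
      by (cases n) (simp_all add: P_def hd_prefix)
    then show "\<forall>n. prefix \<tau> n \<in> P" ..
  qed
  have "patch P s E \<in> fair_strategies (Vex \<union> Vall) Vex E Ef"
  proof (rule patch_in_fair_strategies[OF arena _ s])
    show "\<And>w u. w @ [u] \<in> P \<Longrightarrow> w \<in> P" by (auto simp: P_def hd_append split: if_splits)
    show "fair Vex Ef \<tau>"
      if play: "is_play E \<tau>" and "\<tau> 0 \<in> Vex \<union> Vall" and complies: "complies Vex s \<tau>"
        and in_P: "\<forall>n. prefix \<tau> n \<in> P" for \<tau>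
    proof -
      obtain t where "t \<in> strategies Vall E" "\<tau> = play Vex (\<tau> 0) s t"
        using complying_play_eq_play[OF arena play complies] by blast
      with fair from_v in_P show ?thesis by simp
    qed
  qed simp
  moreover have "play Vex v s t = play Vex v (patch P s E) t" for t
  proof -
    have in_P: "\<forall>n. prefix (play Vex v s t) n \<in> P" by (simp add: from_v play_0)
    show ?thesis
      unfolding eq_play_iff complies_patch_iff[OF in_P] by (simp add: play_0 complies_play)
  qed
  ultimately show ?thesis by metis
qed

theorem lemma2:
  fixes Vex Vall :: "'v set" and E Ef :: "('v \<times> 'v) set"
    and \<alpha> :: "(nat \<Rightarrow> 'v) set" and v :: 'v
  assumes "fair_arena Vex Vall E Ef"
    and "omega_regular \<alpha>"
    and "\<alpha> \<subseteq> {w. \<forall>n. w n \<in> Vex \<union> Vall}"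
    and "v \<in> Vex \<union> Vall"
  shows "(\<exists>s \<in> fair_strategies (Vex \<union> Vall) Vex E Ef.
            \<forall>t \<in> fair_strategies (Vex \<union> Vall) Vall E Ef. play Vex v s t \<in> \<alpha>)
     \<longleftrightarrow>
         (\<exists>s \<in> strategies Vex E. \<forall>t \<in> strategies Vall E.
            fair Vex Ef (play Vex v s t) \<and>
            (fair Vall Ef (play Vex v s t) \<longrightarrow> play Vex v s t \<in> \<alpha>))"
proof -
  note arena = assms(1) and v = assms(4)
  show ?thesis
  proof
    assume "\<exists>s \<in> fair_strategies (Vex \<union> Vall) Vex E Ef.
              \<forall>t \<in> fair_strategies (Vex \<union> Vall) Vall E Ef. play Vex v s t \<in> \<alpha>"
    then obtain s where s_fair: "s \<in> fair_strategies (Vex \<union> Vall) Vex E Ef"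
      and wins: "\<forall>t \<in> fair_strategies (Vex \<union> Vall) Vall E Ef. play Vex v s t \<in> \<alpha>" by blast
    have s: "s \<in> strategies Vex E" using s_fair fair_strategies_subset by blast
    show "\<exists>s \<in> strategies Vex E. \<forall>t \<in> strategies Vall E.
            fair Vex Ef (play Vex v s t) \<and> (fair Vall Ef (play Vex v s t) \<longrightarrow> play Vex v s t \<in> \<alpha>)"
    proof (intro bexI[OF _ s] ballI conjI impI)
      fix t assume t: "t \<in> strategies Vall E"
      show "fair Vex Ef (play Vex v s t)" by (rule fair_play(1)[OF arena v s t s_fair])
      assume "fair Vall Ef (play Vex v s t)"
      with fair_strategy_with_same_play[OF arena v s t] wins show "play Vex v s t \<in> \<alpha>" by metis
    qed
  next
    assume "\<exists>s \<in> strategies Vex E. \<forall>t \<in> strategies Vall E.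
              fair Vex Ef (play Vex v s t) \<and> (fair Vall Ef (play Vex v s t) \<longrightarrow> play Vex v s t \<in> \<alpha>)"
    then obtain s where s: "s \<in> strategies Vex E" and good: "\<forall>t \<in> strategies Vall E.
        fair Vex Ef (play Vex v s t) \<and> (fair Vall Ef (play Vex v s t) \<longrightarrow> play Vex v s t \<in> \<alpha>)"
      by blast
    obtain s' where s': "s' \<in> fair_strategies (Vex \<union> Vall) Vex E Ef"
      and same: "\<forall>t. play Vex v s' t = play Vex v s t"
      using fair_strategy_with_same_plays[OF arena s] good by blast
    show "\<exists>s \<in> fair_strategies (Vex \<union> Vall) Vex E Ef.
            \<forall>t \<in> fair_strategies (Vex \<union> Vall) Vall E Ef. play Vex v s t \<in> \<alpha>"
    proof (intro bexI[OF _ s'] ballI)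
      fix t assume t_fair: "t \<in> fair_strategies (Vex \<union> Vall) Vall E Ef"
      then have t: "t \<in> strategies Vall E" using fair_strategies_subset by blast
      with fair_play(2)[OF arena v s t t_fair] good same show "play Vex v s' t \<in> \<alpha>" by simp
    qed
  qed
qed

end
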